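(* For all $z,w\in\overline{\mathbb C}_{\mathrm{cut}}$ with $zw\neq1$ and all $p,r\in\mathbb Z$, the following holds in $\widehat{\mathcal P}(\mathbb C)$: $$\{z;2p\}+\{w;2r\}=\begin{cases}\{zw+0i;2(p+r-1)\}&\text{if }\mathrm{Arg}\,z+\mathrm{Arg}\,w\le-\pi,\\ \{zw+0i;2(p+r)\}&\text{if }-\pi<\mathrm{Arg}\,z+\mathrm{Arg}\,w\le\pi,\\ \{zw+0i;2(p+r+1)\}&\text{if }\pi<\mathrm{Arg}\,z+\mathrm{Arg}\,w.\end{cases}$$ Here $zw+0i$ denotes $zw$ if $zw\in\mathbb C_{\mathrm{cut}}$ or $zw\in(0,1)$, and the upper boundary point $zw+0i$ if $zw\in(-\infty,0)\cup(1,\infty)$.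
   Context: Let $\mathbb C_{\mathrm{cut}}=\mathbb C\setminus((-\infty,0]\cup[1,\infty))$ and let $\overline{\mathbb C}_{\mathrm{cut}}$ be $\mathbb C_{\mathrm{cut}}$ together with, for each $x\in(-\infty,0)\cup(1,\infty)$, two boundary points $x\pm0i=\lim_{t\searrow0}(x\pm ti)$. The principal branches of $\mathrm{Log}$ and $\mathrm{Arg}=\mathrm{Im}\,\mathrm{Log}$ are extended to $\overline{\mathbb C}_{\mathrm{cut}}$ by continuity from the respective side (so $\mathrm{Arg}(x-0i)=-\pi$ and $\mathrm{Arg}(x+0i)=\pi$ for $x<0$). Let $\widehat{\mathbb C}$ be the quotient of $\overline{\mathbb C}_{\mathrm{cut}}\times(2\mathbb Z)^2$ by $(x+0i,2p,2q)\sim(x-0i,2p+2,2q)$ for $x\in(-\infty,0)$ and $(x+0i,2p,2q)\sim(x-0i,2p,2q+2)$ for $x\in(1,\infty)$ ($p,q\in\mathbb Z$); classes are written $(z;2p,2q)$, and $\hat\pi(z;2p,2q)=z$. Let $\mathrm{FT}=\{(x,y,\tfrac yx,\tfrac{1-1/x}{1-1/y},\tfrac{1-x}{1-y}) : x\neq y\in\mathbb C\setminus\{0,1\}\}$, $\mathrm{FT}^+$ the subset where all five entries have positive imaginary part, and $\widehat{\mathrm{FT}}$ the connected component of $\hat\pi^{-1}(\mathrm{FT})\subset\widehat{\mathbb C}^5$ containing all $((z_0;0,0),\dots,(z_4;0,0))$ with $(z_0,\dots,z_4)\in\mathrm{FT}^+$. The extended pre-Bloch group $\widehat{\mathcal P}(\mathbb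 C)$ is the quotient of the free abelian group $\mathbb Z[\widehat{\mathbb C}]$ by the subgroup generated by all $\sum_{k=0}^4(-1)^k[\hat z_k]$ with $(\hat z_0,\dots,\hat z_4)\in\widehat{\mathrm{FT}}$; the image of $(z;2p,2q)$ is denoted $[z;2p,2q]$. For $z\in\overline{\mathbb C}_{\mathrm{cut}}$ and $p\in\mathbb Z$ put $\{z;2p\}=[z;2p,2]-[z;2p,0]\in\widehat{\mathcal P}(\mathbb C)$ (in $\widehat{\mathcal P}(\mathbb C)$ this equals $[z;2p,2q]-[z;2p,2q-2]$ for every $q\in\mathbb Z$). *)

theory Defs
  imports "HOL-Analysis.Analysis"
begin

definition Ccut :: "complex set" where
  "Ccut = - (complex_of_real ` ({..0} \<union> {1..}))"

text \<open>A point of the closed cut plane is a pair (z, lower): for z in Ccut the flag is False;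
  for z = x real with x < 0 or x > 1 the pair (x, False) is the upper boundary point x+0i
  and (x, True) is the lower boundary point x-0i.\<close>

type_synonym cpt = "complex \<times> bool"

definition Cbar :: "cpt set" where
  "Cbar = {(z, False) | z. z \<in> Ccut} \<union>
          {(complex_of_real x, b) | x b. x < 0 \<or> 1 < x}"

text \<open>Principal Log extended to the boundary by continuity from the respective side.\<close>
definition LogB :: "cpt \<Rightarrow> complex" where
  "LogB zb = (if snd zb \<and> Im (fst zb) = 0 \<and> Re (fst zb) < 0
              then Ln (fst zb) - 2 * pi * \<i> else Ln (fst zb))"

definition ArgB :: "cpt \<Rightarrow> real" where
  "ArgB zb = Im (LogB zb)"

text \<open>Principal Log of 1 - z, extended to the boundary by continuity from the respective side.\<close>
definition Log1mB :: "cpt \<Rightarrow> complex" where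
  "Log1mB zb = (if \<not> snd zb \<and> Im (fst zb) = 0 \<and> 1 < Re (fst zb)
                then Ln (1 - fst zb) - 2 * pi * \<i> else Ln (1 - fst zb))"

text \<open>We model the quotient C-hat concretely as the Riemann surface
  {(u,v). exp u + exp v = 1} in C^2 (with subspace topology); the class (z;2p,2q)
  corresponds to (Log z + 2 pi i p, Log(1-z) - 2 pi i q). This map realizes exactly the
  gluings (x+0i,2p,2q) ~ (x-0i,2p+2,2q) for x<0 and (x+0i,2p,2q) ~ (x-0i,2p,2q+2) for x>1,
  and hat-pi corresponds to (u,v) |-> exp u.\<close>

type_synonym hpt = "complex \<times> complex"

definition Chat :: "hpt set" where
  "Chat = {(u, v). exp u + exp v = 1}"

definition hatpt :: "cpt \<Rightarrow> int \<Rightarrow> int \<Rightarrow> hpt" where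
  "hatpt zb p q = (LogB zb + 2 * pi * \<i> * of_int p, Log1mB zb - 2 * pi * \<i> * of_int q)"

definition hatpi :: "hpt \<Rightarrow> complex" where
  "hatpi a = exp (fst a)"

definition FT :: "(complex \<times> complex \<times> complex \<times> complex \<times> complex) set" where
  "FT = {(x, y, y / x, (1 - 1/x) / (1 - 1/y), (1 - x) / (1 - y)) | x y.
           x \<noteq> y \<and> x \<notin> {0, 1} \<and> y \<notin> {0, 1}}"

definition FTplus :: "(complex \<times> complex \<times> complex \<times> complex \<times> complex) set" where
  "FTplus = {(z0, z1, z2, z3, z4) \<in> FT.
     0 < Im z0 \<and> 0 < Im z1 \<and> 0 < Im z2 \<and> 0 < Im z3 \<and> 0 < Im z4}"

definition FTpre :: "(hpt \<times> hpt \<times> hpt \<times> hpt \<times> hpt) set" where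
  "FTpre = {(a0, a1, a2, a3, a4).
     a0 \<in> Chat \<and> a1 \<in> Chat \<and> a2 \<in> Chat \<and> a3 \<in> Chat \<and> a4 \<in> Chat \<and>
     (hatpi a0, hatpi a1, hatpi a2, hatpi a3, hatpi a4) \<in> FT}"

definition lift0 :: "complex \<times> complex \<times> complex \<times> complex \<times> complex
                      \<Rightarrow> hpt \<times> hpt \<times> hpt \<times> hpt \<times> hpt" where
  "lift0 t = (case t of (z0, z1, z2, z3, z4) \<Rightarrow>
     (hatpt (z0, False) 0 0, hatpt (z1, False) 0 0, hatpt (z2, False) 0 0,
      hatpt (z3, False) 0 0, hatpt (z4, False) 0 0))"

definition FThat :: "(hpt \<times> hpt \<times> hpt \<times> hpt \<times> hpt) set" where
  "FThat = {t. \<exists>z \<in> FTplus. connected_component FTpre (lift0 z) t}"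

text \<open>Elements of the free abelian group Z[C-hat] as finitely supported integer functions.\<close>

definition gen :: "hpt \<Rightarrow> hpt \<Rightarrow> int" where
  "gen a = (\<lambda>x. if x = a then 1 else 0)"

definition fiveterm :: "hpt \<times> hpt \<times> hpt \<times> hpt \<times> hpt \<Rightarrow> hpt \<Rightarrow> int" where
  "fiveterm t = (case t of (a0, a1, a2, a3, a4) \<Rightarrow>
     (\<lambda>x. gen a0 x - gen a1 x + gen a2 x - gen a3 x + gen a4 x))"

inductive_set FTrels :: "(hpt \<Rightarrow> int) set" where
  zero: "(\<lambda>_. 0) \<in> FTrels"
| add: "f \<in> FTrels \<Longrightarrow> t \<in> FThat \<Longrightarrow> (\<lambda>x. f x + fiveterm t x) \<in> FTrels"
| sub: "f \<in> FTrels \<Longrightarrow> t \<in> FThat \<Longrightarrow> (\<lambda>x. f x - fiveterm t x) \<in> FTrels"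

definition Phat_eq :: "(hpt \<Rightarrow> int) \<Rightarrow> (hpt \<Rightarrow> int) \<Rightarrow> bool" where
  "Phat_eq f g \<longleftrightarrow> (\<lambda>x. f x - g x) \<in> FTrels"

definition padd :: "(hpt \<Rightarrow> int) \<Rightarrow> (hpt \<Rightarrow> int) \<Rightarrow> hpt \<Rightarrow> int" where
  "padd f g = (\<lambda>x. f x + g x)"

text \<open>[z;2p,2q]\<close>
definition brk :: "cpt \<Rightarrow> int \<Rightarrow> int \<Rightarrow> hpt \<Rightarrow> int" where
  "brk z p q = gen (hatpt z p q)"

text \<open>{z;2p} = [z;2p,2] - [z;2p,0]\<close>
definition curly :: "cpt \<Rightarrow> int \<Rightarrow> hpt \<Rightarrow> int" where
  "curly z p = (\<lambda>x. brk z p 1 x - brk z p 0 x)"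

text \<open>zw+0i: the upper boundary point when zw lies on a cut, zw itself otherwise.\<close>
definition plus0i :: "complex \<Rightarrow> cpt" where
  "plus0i u = (u, False)"

end

theory Submission
  imports Defs
begin

text \<open>
  Choose logarithms u0, v0, u1, v1, v2 of x0, 1 - x0, x1, 1 - x1, 1 - x1/x0. They determine
  lifts to Chat of all five entries of the five-term configuration of (x0, x1). For x0 = z and
  x1 = zw the first three lifts are (z;2p,0), (zw+0i;2k,0), (w;2r,0), where Log(zw+0i) + 2 pi i k
  = (Log z + 2 pi i p) + (Log w + 2 pi i r); moving v0, v1, v2 to the next sheet turns them into
  (z;2p,2), (zw+0i;2k,2), (w;2r,2) and leaves the last two lifts unchanged. The difference of the
  two five-term relations is {z;2p} + {w;2r} - {zw+0i;2k}, and the three cases of the theorem are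
  the three branches of Log(zw) - Log z - Log w.

  Both relations belong to FThat because the space of such logarithmic configurations is path
  connected: a path of (x0, x1) avoiding 0, 1 and the diagonal lifts by continuous logarithms, so
  every point can be moved into one fibre; the fibre is a torsor under 2 pi i Z^5, and the lifts
  of five small circles around 0, 1 and x0 generate all these translations. Its image is then a
  connected subset of the preimage of FT containing the lift of a point of FT+.
\<close>

section \<open>Paths, logarithms and translations\<close>

lemma path_component_endpoints:
  fixes g :: "real \<Rightarrow> 'a::topological_space"
  assumes "continuous_on {0..1} g" "\<And>t. t \<in> {0..1} \<Longrightarrow> g t \<in> S"
  shows "path_component S (g 0) (g 1)"
  unfolding path_component_def path_def path_image_def pathstart_def pathfinish_def
  by (rule exI[of _ g]) (use assms in auto)

lemma continuous_log_lift:
  fixes f :: "'a::real_normed_vector \<Rightarrow> complex"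
  assumes "continuous_on S f" "contractible S" "\<And>x. x \<in> S \<Longrightarrow> f x \<noteq> 0"
    and "s \<in> S" "exp L = f s"
  obtains g where "continuous_on S g" "\<And>x. x \<in> S \<Longrightarrow> exp (g x) = f x" "g s = L"
proof -
  obtain h where h: "continuous_on S h" "\<And>x. x \<in> S \<Longrightarrow> f x = exp (h x)"
    using continuous_logarithm_on_contractible assms(1-3) by metis
  show ?thesis
  proof
    show "continuous_on S (\<lambda>x. h x + (L - h s))" by (intro continuous_intros h(1))
    show "exp (h x + (L - h s)) = f x" if "x \<in> S" for x
      using h(2)[OF that] h(2)[OF assms(4)] assms(5) by (simp add: exp_add exp_diff)
  qed simp
qed

lemma Re_one_plus_mult_pos:
  fixes q u :: complex
  assumes "cmod q < 1" "cmod u \<le> 1"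
  shows "0 < Re (1 + q * u)"
proof -
  have "\<bar>Re (q * u)\<bar> \<le> cmod q * cmod u"
    using abs_Re_le_cmod[of "q * u"] by (simp add: norm_mult)
  also have "\<dots> \<le> cmod q"
    using assms(2) by (simp add: mult_left_le)
  finally show ?thesis using assms(1) by simp
qed

lemma Ln_one_plus_unit_path:
  fixes q :: complex and f :: "real \<Rightarrow> complex"
  assumes q: "cmod q < 1" and f: "continuous_on S f" "\<And>t. t \<in> S \<Longrightarrow> cmod (f t) = 1"
  shows "continuous_on S (\<lambda>t. Ln (1 + q * f t) - Ln (1 + q))"
    and "\<And>t. t \<in> S \<Longrightarrow> exp (Ln (1 + q * f t) - Ln (1 + q)) = (1 + q * f t) / (1 + q)"
proof -
  have pos: "0 < Re (1 + q * u)" if "cmod u \<le> 1" for u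
    using Re_one_plus_mult_pos[OF q that] .
  then have nz: "1 + q * u \<noteq> 0" if "cmod u \<le> 1" for u
    using that by fastforce
  show "continuous_on S (\<lambda>t. Ln (1 + q * f t) - Ln (1 + q))"
  proof (intro continuous_intros continuous_on_Ln' f)
    show "1 + q * f t \<notin> \<real>\<^sub>\<le>\<^sub>0" if "t \<in> S" for t
      using pos[of "f t"] f(2)[OF that] by (auto simp: complex_nonpos_Reals_iff)
  qed
  show "exp (Ln (1 + q * f t) - Ln (1 + q)) = (1 + q * f t) / (1 + q)" if "t \<in> S" for t
    using nz[of "f t"] nz[of 1] f(2)[OF that] by (simp add: exp_diff)
qed

definition circle_loop :: "complex \<Rightarrow> complex \<Rightarrow> real \<Rightarrow> complex" where
  "circle_loop a c t = a + (c - a) * exp (2 * pi * \<i> * t)"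

text \<open>2 pi i times the winding number of circle_loop a c around a point b off the circle.\<close>

definition circle_wind :: "complex \<Rightarrow> complex \<Rightarrow> complex \<Rightarrow> complex" where
  "circle_wind a c b = (if cmod (b - a) < cmod (c - a) then complex_of_real (2 * pi) * \<i> else 0)"

text \<open>Write circle_loop a c t - b as (c - a) e(t) (1 + q / e(t)) if b lies inside the circle and
  as (a - b) (1 + q e(t)) otherwise, where e(t) = exp (2 pi i t). In both cases cmod q < 1, so the
  last factor has a continuous principal logarithm, which returns to its initial value.\<close>

lemma circle_loop_log:
  assumes "cmod (b - a) \<noteq> cmod (c - a)"
  obtains h where "continuous_on {0..1} h" "h 0 = 0" "h 1 = circle_wind a c b"
    "\<And>t. t \<in> {0..1} \<Longrightarrow> exp (h t) = (circle_loop a c t - b) / (c - b)"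
proof -
  define e where "e t = exp (2 * pi * \<i> * t)" for t :: real
  have e: "continuous_on {0..1} e" "continuous_on {0..1} (\<lambda>t. inverse (e t))"
    "cmod (e t) = 1" "cmod (inverse (e t)) = 1" "e t \<noteq> 0" "e 0 = 1" "e 1 = 1" for t
    by (auto simp: e_def norm_inverse intro!: continuous_intros)
  have "c \<noteq> b" using assms by auto
  show ?thesis
  proof (cases "cmod (b - a) < cmod (c - a)")
    case inside: True
    define q where "q = (a - b) / (c - a)"
    have "c \<noteq> a" using inside by auto
    have q: "cmod q < 1"
      using inside by (simp add: q_def norm_divide divide_less_eq norm_minus_commute)
    have "1 + q \<noteq> 0"
      using Re_one_plus_mult_pos[OF q, of 1] by fastforce
    note L = Ln_one_plus_unit_path[OF q e(2) e(4)]
    show ?thesis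
    proof
      show "continuous_on {0..1} (\<lambda>t. 2 * pi * \<i> * t + (Ln (1 + q * inverse (e t)) - Ln (1 + q)))"
        by (intro continuous_intros L(1))
      fix t :: real assume "t \<in> {0..1}"
      have "exp (2 * pi * \<i> * t + (Ln (1 + q * inverse (e t)) - Ln (1 + q))) =
          e t * ((1 + q * inverse (e t)) / (1 + q))"
        unfolding exp_add L(2)[OF \<open>t \<in> {0..1}\<close>] by (simp add: e_def)
      also have "\<dots> = (e t + q) / (1 + q)"
      proof -
        have "e t * (1 + q * inverse (e t)) = e t + q"
          using e(5)[of t] by (simp add: field_simps)
        then show ?thesis unfolding times_divide_eq_right by (rule arg_cong)
      qed
      also have "\<dots> = ((c - a) * e t + (a - b)) / (c - b)"
      proof -
        have "e t + q = ((c - a) * e t + (a - b)) / (c - a)" "1 + q = (c - b) / (c - a)"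
          using \<open>c \<noteq> a\<close> by (simp_all add: q_def field_simps)
        then show ?thesis
          using \<open>c \<noteq> a\<close> \<open>c \<noteq> b\<close> by simp
      qed
      also have "\<dots> = (circle_loop a c t - b) / (c - b)"
        by (simp add: circle_loop_def e_def algebra_simps)
      finally show "exp (2 * pi * \<i> * t + (Ln (1 + q * inverse (e t)) - Ln (1 + q))) =
          (circle_loop a c t - b) / (c - b)" .
    qed (use inside e in \<open>simp_all add: circle_wind_def\<close>)
  next
    case outside: False
    define q where "q = (c - a) / (a - b)"
    have "a \<noteq> b" using outside assms by auto
    have q: "cmod q < 1" using outside assms \<open>a \<noteq> b\<close>
      by (simp add: q_def norm_divide divide_less_eq norm_minus_commute)
    have "1 + q \<noteq> 0"
      using Re_one_plus_mult_pos[OF q, of 1] by fastforce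
    note L = Ln_one_plus_unit_path[OF q e(1) e(3)]
    show ?thesis
    proof
      show "continuous_on {0..1} (\<lambda>t. Ln (1 + q * e t) - Ln (1 + q))"
        by (rule L(1))
      fix t :: real assume "t \<in> {0..1}"
      have "exp (Ln (1 + q * e t) - Ln (1 + q)) = (1 + q * e t) / (1 + q)"
        by (rule L(2)[OF \<open>t \<in> {0..1}\<close>])
      also have "\<dots> = ((c - a) * e t + (a - b)) / (c - b)"
      proof -
        have "1 + q * e t = ((c - a) * e t + (a - b)) / (a - b)" "1 + q = (c - b) / (a - b)"
          using \<open>a \<noteq> b\<close> by (simp_all add: q_def field_simps)
        then show ?thesis
          using \<open>a \<noteq> b\<close> \<open>c \<noteq> b\<close> by simp
      qed
      also have "\<dots> = (circle_loop a c t - b) / (c - b)"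
        by (simp add: circle_loop_def e_def algebra_simps)
      finally show "exp (Ln (1 + q * e t) - Ln (1 + q)) = (circle_loop a c t - b) / (c - b)" .
    qed (use outside e in \<open>simp_all add: circle_wind_def\<close>)
  qed
qed

definition connects_by_translation :: "'a::real_normed_vector set \<Rightarrow> 'a set \<Rightarrow> 'a \<Rightarrow> bool" where
  "connects_by_translation S F v \<longleftrightarrow> (\<forall>x\<in>F. x + v \<in> F \<and> path_component S x (x + v))"

lemma connects_by_translation_add:
  assumes "connects_by_translation S F v" "connects_by_translation S F w"
  shows "connects_by_translation S F (v + w)"
  using assms unfolding connects_by_translation_def by (metis add.assoc path_component_trans)

lemma connects_by_translation_of_nat:
  assumes "connects_by_translation S F v"
  shows "connects_by_translation S F (of_nat k *\<^sub>R v)"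
proof (induction k)
  case 0
  have "path_component S x x" if "x \<in> F" for x
    using assms that unfolding connects_by_translation_def
    by (meson path_component_mem(1) path_component_refl)
  then show ?case by (simp add: connects_by_translation_def)
next
  case (Suc k)
  then show ?case
    using connects_by_translation_add[OF Suc assms] by (simp add: algebra_simps)
qed

lemma connects_by_translation_of_int:
  assumes v: "connects_by_translation S F v" and minus_in: "\<And>x. x \<in> F \<Longrightarrow> x - v \<in> F"
  shows "connects_by_translation S F (of_int n *\<^sub>R v)"
proof -
  have neg: "connects_by_translation S F (- v)"
    unfolding connects_by_translation_def
  proof
    fix x assume "x \<in> F"
    then have "path_component S (x - v) x"
      using v minus_in unfolding connects_by_translation_def by (metis diff_add_cancel)
    then show "x + - v \<in> F \<and> path_component S x (x + - v)"
      using minus_in \<open>x \<in> F\<close> by (simp add: path_component_sym)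
  qed
  show ?thesis
  proof (cases "0 \<le> n")
    case True
    then show ?thesis using connects_by_translation_of_nat[OF v, of "nat n"] by simp
  next
    case False
    then show ?thesis using connects_by_translation_of_nat[OF neg, of "nat (- n)"] by simp
  qed
qed

abbreviation period :: "int \<Rightarrow> complex" where
  "period n \<equiv> complex_of_real (2 * pi) * \<i> * of_int n"

lemma exp_add_period: "exp (z + period n) = exp z"
  using exp_2pi_1_int[of n] by (simp add: exp_add algebra_simps)

lemma exp_eq_period: "exp w = exp z \<Longrightarrow> \<exists>n. w = z + period n"
  unfolding exp_eq by (auto simp: algebra_simps)

lemma Ln_exp_eq_add_period:
  assumes "-pi < Im x + 2 * pi * j" "Im x + 2 * pi * j \<le> pi"
  shows "Ln (exp x) = x + period j"
proof -
  have "Ln (exp (x + period j)) = x + period j"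
    by (rule Ln_exp) (use assms in simp_all)
  then show ?thesis
    by (simp only: exp_add_period)
qed

lemma Im_Ln_one_minus:
  assumes "0 < Im z"
  shows "-pi < Im (Ln (1 - z))" "Im (Ln (1 - z)) < 0"
proof -
  have "1 - z \<noteq> 0" using assms by auto
  then show "-pi < Im (Ln (1 - z))" by (rule mpi_less_Im_Ln)
  show "Im (Ln (1 - z)) < 0"
    using Im_Ln_pos_le[OF \<open>1 - z \<noteq> 0\<close>] Im_Ln_le_pi[OF \<open>1 - z \<noteq> 0\<close>] assms by auto
qed

section \<open>Logarithmic configurations\<close>

type_synonym cfg = "complex \<times> complex \<times> complex \<times> complex \<times> complex"

definition LogConf :: "cfg set" where
  "LogConf = {(u0, v0, u1, v1, v2).
     exp u0 + exp v0 = 1 \<and> exp u1 + exp v1 = 1 \<and> exp v2 = 1 - exp (u1 - u0)}"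

definition base :: "cfg \<Rightarrow> complex \<times> complex" where
  "base = (\<lambda>(u0, v0, u1, v1, v2). (exp u0, exp u1))"

definition Conf :: "(complex \<times> complex) set" where
  "Conf = {(x0, x1). x0 \<notin> {0, 1} \<and> x1 \<notin> {0, 1} \<and> x0 \<noteq> x1}"

lemma LogConf_iff:
  "(u0, v0, u1, v1, v2) \<in> LogConf \<longleftrightarrow>
     exp v0 = 1 - exp u0 \<and> exp v1 = 1 - exp u1 \<and> exp v2 = 1 - exp u1 / exp u0"
  by (auto simp: LogConf_def exp_diff algebra_simps)

lemma base_in_Conf: "c \<in> LogConf \<Longrightarrow> base c \<in> Conf"
  by (cases c) (auto simp: LogConf_iff base_def Conf_def dest: sym)

lemma path_connected_Conf: "path_connected Conf"
  unfolding path_connected_component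
proof (intro ballI)
  have slide_x1: "path_component Conf (x0, x1) (x0, y1)"
    if "(x0, x1) \<in> Conf" "(x0, y1) \<in> Conf" for x0 x1 y1
  proof (rule path_component_of_subset)
    have "path_connected (- {0, 1, x0} :: complex set)"
      by (rule path_connected_complement_countable) auto
    then have "path_connected (Pair x0 ` (- {0, 1, x0}))"
      by (intro path_connected_continuous_image continuous_intros)
    then show "path_component (Pair x0 ` (- {0, 1, x0})) (x0, x1) (x0, y1)"
      using that by (auto simp: Conf_def path_connected_component)
  qed (use that in \<open>auto simp: Conf_def\<close>)
  have slide_x0: "path_component Conf (x0, x1) (y0, x1)"
    if "(x0, x1) \<in> Conf" "(y0, x1) \<in> Conf" for x0 x1 y0
  proof (rule path_component_of_subset)
    have "path_connected (- {0, 1, x1} :: complex set)"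
      by (rule path_connected_complement_countable) auto
    then have "path_connected ((\<lambda>x. (x, x1)) ` (- {0, 1, x1}))"
      by (intro path_connected_continuous_image continuous_intros)
    then show "path_component ((\<lambda>x. (x, x1)) ` (- {0, 1, x1})) (x0, x1) (y0, x1)"
      using that by (auto simp: Conf_def path_connected_component)
  qed (use that in \<open>auto simp: Conf_def\<close>)
  fix x y assume x: "x \<in> Conf" and y: "y \<in> Conf"
  obtain x0 x1 y0 y1 where xy: "x = (x0, x1)" "y = (y0, y1)" by (cases x, cases y)
  obtain m :: complex where m: "m \<notin> {0, 1, x0, y0}"
    using ex_new_if_finite[of "{0, 1, x0, y0}"] infinite_UNIV_char_0 by auto
  have "(x0, m) \<in> Conf" "(y0, m) \<in> Conf"
    using x y m xy by (auto simp: Conf_def)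
  then have "path_component Conf (x0, x1) (x0, m)" "path_component Conf (x0, m) (y0, m)"
    "path_component Conf (y0, m) (y0, y1)"
    using x y xy slide_x0 slide_x1 by auto
  then show "path_component Conf x y"
    unfolding xy by (meson path_component_trans)
qed

lemma LogConf_path_lift:
  assumes c: "c \<in> LogConf"
    and \<gamma>: "path \<gamma>" "path_image \<gamma> \<subseteq> Conf" "pathstart \<gamma> = base c"
  obtains c' where "path_component LogConf c c'" "base c' = pathfinish \<gamma>"
proof -
  obtain u0 v0 u1 v1 v2 where c_eq: "c = (u0, v0, u1, v1, v2)" by (cases c)
  define x0 x1 where "x0 = fst \<circ> \<gamma>" and "x1 = snd \<circ> \<gamma>"
  have avoid: "x0 t \<noteq> 0" "x0 t \<noteq> 1" "x1 t \<noteq> 0" "x1 t \<noteq> 1" "x1 t \<noteq> x0 t" if "t \<in> {0..1}" for t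
  proof -
    have "(x0 t, x1 t) \<in> Conf"
      using \<gamma>(2) that by (auto simp: path_image_def x0_def x1_def)
    then show "x0 t \<noteq> 0" "x0 t \<noteq> 1" "x1 t \<noteq> 0" "x1 t \<noteq> 1" "x1 t \<noteq> x0 t"
      by (auto simp: Conf_def)
  qed
  have "continuous_on {0..1} x0" "continuous_on {0..1} x1"
    using \<gamma>(1) unfolding path_def x0_def x1_def
    by (auto intro: continuous_on_compose continuous_intros)
  then have cont: "continuous_on {0..1} x0" "continuous_on {0..1} (\<lambda>t. 1 - x0 t)"
    "continuous_on {0..1} x1" "continuous_on {0..1} (\<lambda>t. 1 - x1 t)"
    "continuous_on {0..1} (\<lambda>t. 1 - x1 t / x0 t)"
    using avoid by (auto intro!: continuous_intros)
  have start: "x0 0 = exp u0" "x1 0 = exp u1"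
    using \<gamma>(3) c_eq by (auto simp: pathstart_def base_def x0_def x1_def)
  have e: "exp v0 = 1 - exp u0" "exp v1 = 1 - exp u1" "exp v2 = 1 - exp u1 / exp u0"
    using c c_eq LogConf_iff by auto
  have I: "contractible {0..1::real}" "(0::real) \<in> {0..1}"
    by (auto simp: convex_imp_contractible)
  obtain g0 where g0: "continuous_on {0..1} g0" "\<And>t. t \<in> {0..1} \<Longrightarrow> exp (g0 t) = x0 t" "g0 0 = u0"
    by (rule continuous_log_lift[OF cont(1) I(1) _ I(2)]) (use avoid start in auto)
  obtain g1 where g1: "continuous_on {0..1} g1" "\<And>t. t \<in> {0..1} \<Longrightarrow> exp (g1 t) = 1 - x0 t" "g1 0 = v0"
    by (rule continuous_log_lift[OF cont(2) I(1) _ I(2)]) (use avoid start e in auto)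
  obtain g2 where g2: "continuous_on {0..1} g2" "\<And>t. t \<in> {0..1} \<Longrightarrow> exp (g2 t) = x1 t" "g2 0 = u1"
    by (rule continuous_log_lift[OF cont(3) I(1) _ I(2)]) (use avoid start in auto)
  obtain g3 where g3: "continuous_on {0..1} g3" "\<And>t. t \<in> {0..1} \<Longrightarrow> exp (g3 t) = 1 - x1 t" "g3 0 = v1"
    by (rule continuous_log_lift[OF cont(4) I(1) _ I(2)]) (use avoid start e in auto)
  obtain g4 where g4: "continuous_on {0..1} g4"
    "\<And>t. t \<in> {0..1} \<Longrightarrow> exp (g4 t) = 1 - x1 t / x0 t" "g4 0 = v2"
    by (rule continuous_log_lift[OF cont(5) I(1) _ I(2)]) (use avoid start e in auto)
  define g where "g t = (g0 t, g1 t, g2 t, g3 t, g4 t)" for t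
  have "path_component LogConf (g 0) (g 1)"
  proof (rule path_component_endpoints)
    show "continuous_on {0..1} g"
      unfolding g_def by (intro continuous_intros g0 g1 g2 g3 g4)
  qed (simp add: g_def LogConf_iff g0 g1 g2 g3 g4)
  moreover have "base (g 1) = pathfinish \<gamma>"
    by (simp add: g_def base_def g0 g2 x0_def x1_def pathfinish_def)
  ultimately show ?thesis
    using that c_eq g0(3) g1(3) g2(3) g3(3) g4(3) by (simp add: g_def)
qed

lemma LogConf_loop_x1:
  assumes c: "(u0, v0, u1, v1, v2) \<in> LogConf" and x: "exp u0 = x0" "exp u1 = x1"
    and off: "cmod (0 - a) \<noteq> cmod (x1 - a)" "cmod (1 - a) \<noteq> cmod (x1 - a)"
      "cmod (x0 - a) \<noteq> cmod (x1 - a)"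
  shows "path_component LogConf (u0, v0, u1, v1, v2)
           (u0, v0, u1 + circle_wind a x1 0, v1 + circle_wind a x1 1, v2 + circle_wind a x1 x0)"
proof -
  let ?\<gamma> = "circle_loop a x1"
  have e: "exp v0 = 1 - x0" "exp v1 = 1 - x1" "exp v2 = 1 - x1 / x0"
    using c x by (simp_all add: LogConf_iff)
  have ne: "x0 \<noteq> 0" "x1 \<noteq> 0" "x1 \<noteq> 1" "x1 \<noteq> x0"
    using base_in_Conf[OF c] x by (auto simp: base_def Conf_def)
  obtain h0 where h0: "continuous_on {0..1} h0" "h0 0 = 0" "h0 1 = circle_wind a x1 0"
    "\<And>t. t \<in> {0..1} \<Longrightarrow> exp (h0 t) = (?\<gamma> t - 0) / (x1 - 0)"
    using circle_loop_log off(1) by blast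
  obtain h1 where h1: "continuous_on {0..1} h1" "h1 0 = 0" "h1 1 = circle_wind a x1 1"
    "\<And>t. t \<in> {0..1} \<Longrightarrow> exp (h1 t) = (?\<gamma> t - 1) / (x1 - 1)"
    using circle_loop_log off(2) by blast
  obtain h2 where h2: "continuous_on {0..1} h2" "h2 0 = 0" "h2 1 = circle_wind a x1 x0"
    "\<And>t. t \<in> {0..1} \<Longrightarrow> exp (h2 t) = (?\<gamma> t - x0) / (x1 - x0)"
    using circle_loop_log off(3) by blast
  define g where "g t = (u0, v0, u1 + h0 t, v1 + h1 t, v2 + h2 t)" for t
  have "path_component LogConf (g 0) (g 1)"
  proof (rule path_component_endpoints)
    show "continuous_on {0..1} g"
      unfolding g_def by (intro continuous_intros h0(1) h1(1) h2(1))
    fix t :: real assume t: "t \<in> {0..1}"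
    have "exp (u1 + h0 t) = ?\<gamma> t"
      using ne by (simp add: exp_add h0(4)[OF t] x)
    moreover have "exp (v1 + h1 t) = 1 - ?\<gamma> t"
      using ne by (simp add: exp_add h1(4)[OF t] e field_simps)
    moreover have "exp (v2 + h2 t) = 1 - ?\<gamma> t / x0"
      using ne by (simp add: exp_add h2(4)[OF t] e field_simps)
    ultimately show "g t \<in> LogConf"
      using e x by (simp add: g_def LogConf_iff)
  qed
  then show ?thesis
    by (simp add: g_def h0(2,3) h1(2,3) h2(2,3))
qed

lemma LogConf_loop_x0:
  assumes c: "(u0, v0, u1, v1, v2) \<in> LogConf" and x: "exp u0 = x0" "exp u1 = x1"
    and off: "cmod (0 - a) \<noteq> cmod (x0 - a)" "cmod (1 - a) \<noteq> cmod (x0 - a)"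
      "cmod (x1 - a) \<noteq> cmod (x0 - a)"
  shows "path_component LogConf (u0, v0, u1, v1, v2)
           (u0 + circle_wind a x0 0, v0 + circle_wind a x0 1, u1, v1,
            v2 + circle_wind a x0 x1 - circle_wind a x0 0)"
proof -
  let ?\<gamma> = "circle_loop a x0"
  have e: "exp v0 = 1 - x0" "exp v1 = 1 - x1" "exp v2 = 1 - x1 / x0"
    using c x by (simp_all add: LogConf_iff)
  have ne: "x0 \<noteq> 0" "x0 \<noteq> 1" "x1 \<noteq> x0"
    using base_in_Conf[OF c] x by (auto simp: base_def Conf_def)
  obtain h0 where h0: "continuous_on {0..1} h0" "h0 0 = 0" "h0 1 = circle_wind a x0 0"
    "\<And>t. t \<in> {0..1} \<Longrightarrow> exp (h0 t) = (?\<gamma> t - 0) / (x0 - 0)"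
    using circle_loop_log off(1) by blast
  obtain h1 where h1: "continuous_on {0..1} h1" "h1 0 = 0" "h1 1 = circle_wind a x0 1"
    "\<And>t. t \<in> {0..1} \<Longrightarrow> exp (h1 t) = (?\<gamma> t - 1) / (x0 - 1)"
    using circle_loop_log off(2) by blast
  obtain h2 where h2: "continuous_on {0..1} h2" "h2 0 = 0" "h2 1 = circle_wind a x0 x1"
    "\<And>t. t \<in> {0..1} \<Longrightarrow> exp (h2 t) = (?\<gamma> t - x1) / (x0 - x1)"
    using circle_loop_log off(3) by blast
  define g where "g t = (u0 + h0 t, v0 + h1 t, u1, v1, v2 + h2 t - h0 t)" for t
  have "path_component LogConf (g 0) (g 1)"
  proof (rule path_component_endpoints)
    show "continuous_on {0..1} g"
      unfolding g_def by (intro continuous_intros h0(1) h1(1) h2(1))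
    fix t :: real assume t: "t \<in> {0..1}"
    have \<gamma>: "exp (u0 + h0 t) = ?\<gamma> t"
      using ne by (simp add: exp_add h0(4)[OF t] x)
    moreover have "exp (v0 + h1 t) = 1 - ?\<gamma> t"
      using ne by (simp add: exp_add h1(4)[OF t] e field_simps)
    moreover have "exp (v2 + h2 t - h0 t) = 1 - x1 / ?\<gamma> t"
    proof -
      have "?\<gamma> t \<noteq> 0" using \<gamma> by (metis exp_not_eq_zero)
      then show ?thesis
        using ne by (simp add: exp_add exp_diff h0(4)[OF t] h2(4)[OF t] e field_simps)
    qed
    ultimately show "g t \<in> LogConf"
      using e x by (simp add: g_def LogConf_iff)
  qed
  then show ?thesis
    by (simp add: g_def h0(2,3) h1(2,3) h2(2,3))
qed

definition period_vec :: "int \<Rightarrow> int \<Rightarrow> int \<Rightarrow> int \<Rightarrow> int \<Rightarrow> cfg" where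
  "period_vec k0 l0 k1 l1 l2 = (period k0, period l0, period k1, period l1, period l2)"

definition LogConf_fibre :: "complex \<times> complex \<Rightarrow> cfg set" where
  "LogConf_fibre x = {c \<in> LogConf. base c = x}"

lemma LogConf_fibre_translate:
  "c \<in> LogConf_fibre x \<Longrightarrow> c + period_vec k0 l0 k1 l1 l2 \<in> LogConf_fibre x"
  by (cases c) (simp add: LogConf_fibre_def LogConf_iff base_def period_vec_def
      exp_add_period[simplified])

lemma LogConf_fibre_translate_back:
  "c \<in> LogConf_fibre x \<Longrightarrow> c - period_vec k0 l0 k1 l1 l2 \<in> LogConf_fibre x"
  using LogConf_fibre_translate[of c x "- k0" "- l0" "- k1" "- l1" "- l2"]
  by (simp add: period_vec_def diff_conv_add_uminus)

lemma LogConf_fibre_diff: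
  assumes "c \<in> LogConf_fibre x" "c' \<in> LogConf_fibre x"
  obtains k0 l0 k1 l1 l2 where "c' = c + period_vec k0 l0 k1 l1 l2"
proof -
  obtain u0 v0 u1 v1 v2 u0' v0' u1' v1' v2' where
    c: "c = (u0, v0, u1, v1, v2)" and c': "c' = (u0', v0', u1', v1', v2')"
    by (cases c, cases c')
  have "exp u0' = exp u0" "exp v0' = exp v0" "exp u1' = exp u1" "exp v1' = exp v1"
    "exp v2' = exp v2"
    using assms by (auto simp: c c' LogConf_fibre_def LogConf_iff base_def)
  then obtain k0 l0 k1 l1 l2 where
    "u0' = u0 + period k0" "v0' = v0 + period l0" "u1' = u1 + period k1"
    "v1' = v1 + period l1" "v2' = v2 + period l2"
    by (metis exp_eq_period)
  then show ?thesis
    using that[of k0 l0 k1 l1 l2] by (simp add: c c' period_vec_def)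
qed

text \<open>Under these hypotheses the circles through x0 about 0 and about 1 enclose x1 but not the other
  special point, while the circles through x1 about 0, 1 and x0 enclose none of the other special
  points. Lifting the five loops therefore realises the following translations.\<close>

lemma LogConf_fibre_generators:
  assumes near0: "cmod x1 < cmod x0" "cmod x0 < 1"
    and near1: "cmod (x1 - 1) < cmod (x0 - 1)" "cmod (x0 - 1) < 1"
    and near_x0: "cmod (x1 - x0) < cmod x0" "cmod (x1 - x0) < cmod (1 - x0)"
  shows "connects_by_translation LogConf (LogConf_fibre (x0, x1)) (period_vec 1 0 0 0 0)"
    "connects_by_translation LogConf (LogConf_fibre (x0, x1)) (period_vec 0 1 0 0 1)"
    "connects_by_translation LogConf (LogConf_fibre (x0, x1)) (period_vec 0 0 1 0 0)"
    "connects_by_translation LogConf (LogConf_fibre (x0, x1)) (period_vec 0 0 0 1 0)"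
    "connects_by_translation LogConf (LogConf_fibre (x0, x1)) (period_vec 0 0 0 0 1)"
proof -
  have loops: "path_component LogConf c (c + period_vec 1 0 0 0 0)"
    "path_component LogConf c (c + period_vec 0 1 0 0 1)"
    "path_component LogConf c (c + period_vec 0 0 1 0 0)"
    "path_component LogConf c (c + period_vec 0 0 0 1 0)"
    "path_component LogConf c (c + period_vec 0 0 0 0 1)"
    if "c \<in> LogConf_fibre (x0, x1)" for c
  proof -
    obtain u0 v0 u1 v1 v2 where c: "c = (u0, v0, u1, v1, v2)" by (cases c)
    have lc: "(u0, v0, u1, v1, v2) \<in> LogConf" and x: "exp u0 = x0" "exp u1 = x1"
      using that by (auto simp: c LogConf_fibre_def base_def)
    have ne: "x0 \<noteq> 0" "x0 \<noteq> 1" "x1 \<noteq> 0" "x1 \<noteq> 1" "x1 \<noteq> x0"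
      using base_in_Conf[OF lc] x by (auto simp: base_def Conf_def)
    note dist = near0 near1 near_x0
    have "path_component LogConf c
        (u0 + circle_wind 0 x0 0, v0 + circle_wind 0 x0 1, u1, v1,
         v2 + circle_wind 0 x0 x1 - circle_wind 0 x0 0)"
      unfolding c by (rule LogConf_loop_x0[OF lc x]) (use dist ne in simp_all)
    then show "path_component LogConf c (c + period_vec 1 0 0 0 0)"
      using dist ne by (simp add: c period_vec_def circle_wind_def)
    have "path_component LogConf c
        (u0 + circle_wind 1 x0 0, v0 + circle_wind 1 x0 1, u1, v1,
         v2 + circle_wind 1 x0 x1 - circle_wind 1 x0 0)"
      unfolding c by (rule LogConf_loop_x0[OF lc x]) (use dist ne in simp_all)
    then show "path_component LogConf c (c + period_vec 0 1 0 0 1)"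
      using dist ne by (simp add: c period_vec_def circle_wind_def)
    have "path_component LogConf c
        (u0, v0, u1 + circle_wind 0 x1 0, v1 + circle_wind 0 x1 1, v2 + circle_wind 0 x1 x0)"
      unfolding c by (rule LogConf_loop_x1[OF lc x]) (use dist ne in simp_all)
    then show "path_component LogConf c (c + period_vec 0 0 1 0 0)"
      using dist ne by (simp add: c period_vec_def circle_wind_def)
    have "path_component LogConf c
        (u0, v0, u1 + circle_wind 1 x1 0, v1 + circle_wind 1 x1 1, v2 + circle_wind 1 x1 x0)"
      unfolding c by (rule LogConf_loop_x1[OF lc x]) (use dist ne in simp_all)
    then show "path_component LogConf c (c + period_vec 0 0 0 1 0)"
      using dist ne by (simp add: c period_vec_def circle_wind_def)
    have "path_component LogConf c
        (u0, v0, u1 + circle_wind x0 x1 0, v1 + circle_wind x0 x1 1, v2 + circle_wind x0 x1 x0)"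
      unfolding c by (rule LogConf_loop_x1[OF lc x]) (use dist ne in simp_all)
    then show "path_component LogConf c (c + period_vec 0 0 0 0 1)"
      using dist ne by (simp add: c period_vec_def circle_wind_def)
  qed
  then show
    "connects_by_translation LogConf (LogConf_fibre (x0, x1)) (period_vec 1 0 0 0 0)"
    "connects_by_translation LogConf (LogConf_fibre (x0, x1)) (period_vec 0 1 0 0 1)"
    "connects_by_translation LogConf (LogConf_fibre (x0, x1)) (period_vec 0 0 1 0 0)"
    "connects_by_translation LogConf (LogConf_fibre (x0, x1)) (period_vec 0 0 0 1 0)"
    "connects_by_translation LogConf (LogConf_fibre (x0, x1)) (period_vec 0 0 0 0 1)"
    by (simp_all add: connects_by_translation_def loops LogConf_fibre_translate)
qed

lemma connects_by_translation_period_vec: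
  assumes "connects_by_translation LogConf (LogConf_fibre x) (period_vec 1 0 0 0 0)"
    "connects_by_translation LogConf (LogConf_fibre x) (period_vec 0 1 0 0 1)"
    "connects_by_translation LogConf (LogConf_fibre x) (period_vec 0 0 1 0 0)"
    "connects_by_translation LogConf (LogConf_fibre x) (period_vec 0 0 0 1 0)"
    "connects_by_translation LogConf (LogConf_fibre x) (period_vec 0 0 0 0 1)"
  shows "connects_by_translation LogConf (LogConf_fibre x) (period_vec k0 l0 k1 l1 l2)"
proof -
  have "period_vec k0 l0 k1 l1 l2 =
      of_int k0 *\<^sub>R period_vec 1 0 0 0 0 + of_int l0 *\<^sub>R period_vec 0 1 0 0 1 +
      of_int k1 *\<^sub>R period_vec 0 0 1 0 0 + of_int l1 *\<^sub>R period_vec 0 0 0 1 0 +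
      of_int (l2 - l0) *\<^sub>R period_vec 0 0 0 0 1"
    by (simp add: period_vec_def scaleR_conv_of_real algebra_simps)
  then show ?thesis
    by (simp only:) (intro connects_by_translation_add connects_by_translation_of_int assms
        LogConf_fibre_translate_back)
qed

definition base0 :: "complex \<times> complex" where
  "base0 = (Complex (1/2) (1/2), 1/2)"

lemma base0_in_Conf: "base0 \<in> Conf"
  by (simp add: base0_def Conf_def complex_eq_iff)

lemma LogConf_fibre_base0_connected:
  assumes "c \<in> LogConf_fibre base0" "c' \<in> LogConf_fibre base0"
  shows "path_component LogConf c c'"
proof -
  let ?x0 = "Complex (1/2) (1/2)" and ?x1 = "1/2 :: complex"
  have dist: "cmod ?x1 < cmod ?x0" "cmod ?x0 < 1" "cmod (?x1 - 1) < cmod (?x0 - 1)"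
    "cmod (?x0 - 1) < 1" "cmod (?x1 - ?x0) < cmod ?x0" "cmod (?x1 - ?x0) < cmod (1 - ?x0)"
    unfolding cmod_def by (simp_all add: power2_eq_square)
  obtain k0 l0 k1 l1 l2 where "c' = c + period_vec k0 l0 k1 l1 l2"
    using LogConf_fibre_diff assms by blast
  moreover have "connects_by_translation LogConf (LogConf_fibre base0) (period_vec k0 l0 k1 l1 l2)"
    unfolding base0_def
    by (rule connects_by_translation_period_vec; rule LogConf_fibre_generators[OF dist])
  ultimately show ?thesis
    using assms by (simp add: connects_by_translation_def)
qed

lemma path_connected_LogConf: "path_connected LogConf"
  unfolding path_connected_component
proof (intro ballI)
  have to_base0: "\<exists>d. path_component LogConf c d \<and> d \<in> LogConf_fibre base0"
    if c: "c \<in> LogConf" for c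
  proof -
    obtain \<gamma> where "path \<gamma>" "path_image \<gamma> \<subseteq> Conf" "pathstart \<gamma> = base c" "pathfinish \<gamma> = base0"
      using path_connected_Conf base_in_Conf[OF c] base0_in_Conf
      unfolding path_connected_def by blast
    then obtain d where "path_component LogConf c d" "base d = base0"
      using LogConf_path_lift c by metis
    then show ?thesis
      using path_component_mem(2) unfolding LogConf_fibre_def by blast
  qed
  fix c c' assume "c \<in> LogConf" "c' \<in> LogConf"
  then obtain d d' where cd: "path_component LogConf c d" and c'd': "path_component LogConf c' d'"
    and d: "d \<in> LogConf_fibre base0" "d' \<in> LogConf_fibre base0"
    using to_base0 by blast
  have "path_component LogConf d d'"
    using LogConf_fibre_base0_connected[OF d] .
  then show "path_component LogConf c c'"
    using cd c'd' path_component_sym path_component_trans by blast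
qed

section \<open>The five-term relation of a logarithmic configuration\<close>

text \<open>For c in LogConf over (x0, x1) the five entries lie over x0, x1, x1/x0,
  (1 - 1/x0)/(1 - 1/x1) and (1 - x0)/(1 - x1).\<close>

definition five_term_config :: "cfg \<Rightarrow> hpt \<times> hpt \<times> hpt \<times> hpt \<times> hpt" where
  "five_term_config = (\<lambda>(u0, v0, u1, v1, v2).
     ((u0, v0), (u1, v1), (u1 - u0, v2), (u1 - u0 + v0 - v1, v2 - v1), (v0 - v1, v2 - v1 + u0)))"

lemma continuous_on_five_term_config: "continuous_on S five_term_config"
  unfolding five_term_config_def case_prod_beta' by (intro continuous_intros)

lemma five_term_config_in_FTpre:
  assumes c: "c \<in> LogConf"
  shows "five_term_config c \<in> FTpre"
proof -
  obtain u0 v0 u1 v1 v2 where c_eq: "c = (u0, v0, u1, v1, v2)" by (cases c)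
  define x0 x1 where "x0 = exp u0" and "x1 = exp u1"
  have e: "exp v0 = 1 - x0" "exp v1 = 1 - x1" "exp v2 = 1 - x1 / x0"
    using c by (simp_all add: c_eq LogConf_iff x0_def x1_def)
  have ne: "x0 \<noteq> 0" "x0 \<noteq> 1" "x1 \<noteq> 0" "x1 \<noteq> 1" "x1 \<noteq> x0"
    using base_in_Conf[OF c] by (auto simp: c_eq base_def Conf_def x0_def x1_def)
  have x: "exp u0 = x0" "exp u1 = x1" by (simp_all add: x0_def x1_def)
  have exps: "exp (u1 - u0) = x1 / x0"
    "exp (u1 - u0 + v0 - v1) = x1 * (1 - x0) / (x0 * (1 - x1))"
    "exp (v2 - v1) = (x0 - x1) / (x0 * (1 - x1))"
    "exp (v0 - v1) = (1 - x0) / (1 - x1)"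
    "exp (v2 - v1 + u0) = (x0 - x1) / (1 - x1)"
    using ne by (simp_all add: exp_add exp_diff x e field_simps)
  have "(x0, x1, x1 / x0, x1 * (1 - x0) / (x0 * (1 - x1)), (1 - x0) / (1 - x1)) \<in> FT"
    unfolding FT_def
  proof (intro CollectI exI conjI)
    have "x1 * (1 - x0) / (x0 * (1 - x1)) = (1 - 1 / x0) / (1 - 1 / x1)"
      using ne by (simp add: field_simps)
    then show "(x0, x1, x1 / x0, x1 * (1 - x0) / (x0 * (1 - x1)), (1 - x0) / (1 - x1)) =
        (x0, x1, x1 / x0, (1 - 1 / x0) / (1 - 1 / x1), (1 - x0) / (1 - x1))"
      by simp
  qed (use ne in auto)
  moreover have "x1 * (1 - x0) / (x0 * (1 - x1)) + (x0 - x1) / (x0 * (1 - x1)) = 1"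
    "(1 - x0) / (1 - x1) + (x0 - x1) / (1 - x1) = 1"
  proof -
    have "x0 * (1 - x1) \<noteq> 0" "1 - x1 \<noteq> 0" using ne by auto
    then show "x1 * (1 - x0) / (x0 * (1 - x1)) + (x0 - x1) / (x0 * (1 - x1)) = 1"
      "(1 - x0) / (1 - x1) + (x0 - x1) / (1 - x1) = 1"
      unfolding add_divide_distrib[symmetric] by (simp_all add: algebra_simps)
  qed
  ultimately show ?thesis
    using e ne
    by (simp add: FTpre_def Chat_def hatpi_def five_term_config_def c_eq x exps)
qed

lemma Ln_five_term_identities:
  fixes a b :: complex
  defines "z3 \<equiv> (1 - 1 / a) / (1 - 1 / b)" and "z4 \<equiv> (1 - a) / (1 - b)"
  assumes pos: "0 < Im a" "0 < Im b" "0 < Im (b / a)" "0 < Im z3" "0 < Im z4"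
  shows "Ln (b / a) = Ln b - Ln a"
    and "Ln z3 = Ln b - Ln a + Ln (1 - a) - Ln (1 - b)"
    and "Ln (1 - z3) = Ln (1 - b / a) - Ln (1 - b)"
    and "Ln z4 = Ln (1 - a) - Ln (1 - b)"
    and "Ln (1 - z4) = Ln (1 - b / a) - Ln (1 - b) + Ln a"
proof -
  have nz: "a \<noteq> 0" "b \<noteq> 0" "1 - a \<noteq> 0" "1 - b \<noteq> 0" "1 - b / a \<noteq> 0" "z4 \<noteq> 0" "1 - z3 \<noteq> 0"
    using pos by (auto simp: Im_divide)
  have upper: "0 < Im (Ln z) \<and> Im (Ln z) < pi" if "0 < Im z" for z
    using Im_Ln_pos_lt_imp[OF that] .
  note lower = Im_Ln_one_minus
  show ba: "Ln (b / a) = Ln b - Ln a"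
    by (rule Ln_unique) (use nz upper[OF pos(1)] upper[OF pos(2)] in \<open>auto simp: exp_diff\<close>)
  show z4: "Ln z4 = Ln (1 - a) - Ln (1 - b)"
    by (rule Ln_unique)
      (use nz lower[OF pos(1)] lower[OF pos(2)] in \<open>auto simp: exp_diff z4_def\<close>)
  have "Ln z3 = Ln (b / a) + Ln z4"
  proof (rule exp_complex_eqI)
    show "\<bar>Im (Ln z3) - Im (Ln (b / a) + Ln z4)\<bar> < 2 * pi"
      using upper[OF pos(3)] upper[OF pos(4)] upper[OF pos(5)] by auto
    have "z3 = b / a * z4" using nz by (simp add: z3_def z4_def field_simps)
    then show "exp (Ln z3) = exp (Ln (b / a) + Ln z4)"
      using nz pos(4,5) by (auto simp: exp_add)
  qed
  then show "Ln z3 = Ln b - Ln a + Ln (1 - a) - Ln (1 - b)"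
    by (simp add: ba z4)
  have "1 - z3 = (1 - b / a) / (1 - b)" using nz by (simp add: z3_def field_simps)
  then show z3': "Ln (1 - z3) = Ln (1 - b / a) - Ln (1 - b)"
    by (intro Ln_unique)
      (use nz lower[OF pos(3)] lower[OF pos(2)] in \<open>auto simp: exp_diff\<close>)
  have "1 - z4 = (1 - z3) * a" using nz by (simp add: z3_def z4_def field_simps)
  then show "Ln (1 - z4) = Ln (1 - b / a) - Ln (1 - b) + Ln a"
    by (intro Ln_unique)
      (use nz lower[OF pos(4)] upper[OF pos(1)] in \<open>auto simp: exp_add exp_diff simp flip: z3'\<close>)
qed

lemma hatpt_upper_half: "0 < Im z \<Longrightarrow> hatpt (z, False) 0 0 = (Ln z, Ln (1 - z))"
  by (simp add: hatpt_def LogB_def Log1mB_def)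

lemma five_term_config_in_FThat:
  assumes "c \<in> LogConf"
  shows "five_term_config c \<in> FThat"
proof -
  define a b where "a = \<i>" and "b = Complex (-1) 3"
  define z where "z = (a, b, b / a, (1 - 1 / a) / (1 - 1 / b), (1 - a) / (1 - b))"
  have pos: "0 < Im a" "0 < Im b" "0 < Im (b / a)" "0 < Im ((1 - 1 / a) / (1 - 1 / b))"
    "0 < Im ((1 - a) / (1 - b))"
    by (simp_all add: a_def b_def Im_divide Re_divide power2_eq_square)
  have ne: "a \<noteq> 0" "b \<noteq> 0" "a \<noteq> b" "a \<noteq> 1" "b \<noteq> 1"
    by (simp_all add: a_def b_def complex_eq_iff)
  then have "z \<in> FTplus"
    using pos by (auto simp: z_def FTplus_def FT_def)
  define c0 where "c0 = (Ln a, Ln (1 - a), Ln b, Ln (1 - b), Ln (1 - b / a))"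
  have "c0 \<in> LogConf"
    using ne by (simp add: c0_def LogConf_iff exp_diff)
  moreover have "lift0 z = five_term_config c0"
    using pos by (simp add: lift0_def z_def c0_def five_term_config_def hatpt_upper_half
        Ln_five_term_identities)
  ultimately have "connected_component FTpre (lift0 z) (five_term_config c)"
    unfolding connected_component_def
    using assms path_connected_LogConf five_term_config_in_FTpre
    by (intro exI[of _ "five_term_config ` LogConf"])
      (auto intro: path_connected_imp_connected path_connected_continuous_image
        continuous_on_five_term_config)
  then show ?thesis
    using \<open>z \<in> FTplus\<close> by (auto simp: FThat_def)
qed

section \<open>Sums of the elements {z;2p}\<close>

lemma Cbar_not_0_1: "z \<in> Cbar \<Longrightarrow> fst z \<notin> {0, 1}"
  by (auto simp: Cbar_def Ccut_def image_iff)

lemma exp_LogB: "fst z \<noteq> 0 \<Longrightarrow> exp (LogB z) = fst z"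
  by (simp add: LogB_def exp_diff)

lemma exp_Log1mB: "fst z \<noteq> 1 \<Longrightarrow> exp (Log1mB z) = 1 - fst z"
  by (simp add: Log1mB_def exp_diff)

lemma ArgB_bounds:
  assumes "fst z \<noteq> 0"
  shows "-pi \<le> ArgB z" "ArgB z \<le> pi"
proof -
  have "-pi < Im (Ln (fst z))" "Im (Ln (fst z)) \<le> pi"
    using assms by (simp_all add: mpi_less_Im_Ln Im_Ln_le_pi)
  moreover have "Im (Ln (fst z)) = pi" if "Im (fst z) = 0" "Re (fst z) < 0"
    using that assms by (simp add: Im_Ln_eq_pi)
  ultimately show "-pi \<le> ArgB z" "ArgB z \<le> pi"
    by (auto simp: ArgB_def LogB_def)
qed

text \<open>The configurations c and c' below lie over (z, m); the second moves the logarithms of 1 - z,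
  1 - m and 1 - w to the next sheet and leaves the last two lifts of the five-term configuration
  unchanged, so the difference of their five-term relations is the asserted identity.\<close>

lemma curly_add_eq:
  assumes z: "fst z \<notin> {0, 1}" and w: "fst w \<notin> {0, 1}" and m: "fst m \<notin> {0, 1}"
    and log_m: "LogB m + period k = LogB z + period p + (LogB w + period r)"
  shows "Phat_eq (padd (curly z p) (curly w r)) (curly m k)"
proof -
  define c where "c = (LogB z + period p, Log1mB z, LogB m + period k, Log1mB m, Log1mB w)"
  define c' where "c' = c - period_vec 0 1 0 1 1"
  have w_diff: "LogB m + period k - (LogB z + period p) = LogB w + period r"
    using log_m by (simp add: algebra_simps)
  have e: "exp (LogB z + period p) = fst z" "exp (LogB m + period k) = fst m"
    "exp (LogB w + period r) = fst w"
    using z w m unfolding exp_add_period by (simp_all add: exp_LogB)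
  have "exp (LogB m + period k) / exp (LogB z + period p) = fst w"
    by (simp only: exp_diff[symmetric] w_diff e(3))
  then have "c \<in> LogConf"
    using z w m unfolding c_def LogConf_iff e by (simp add: exp_Log1mB)
  then have "c' \<in> LogConf"
    using LogConf_fibre_translate_back[of c "base c"] by (simp add: c'_def LogConf_fibre_def)
  have "five_term_config c = (hatpt z p 0, hatpt m k 0, hatpt w r 0, X, Y)"
    and "five_term_config c' = (hatpt z p 1, hatpt m k 1, hatpt w r 1, X, Y)"
    if "X = (LogB w + period r + Log1mB z - Log1mB m, Log1mB w - Log1mB m)"
      and "Y = (Log1mB z - Log1mB m, Log1mB w - Log1mB m + (LogB z + period p))" for X Y
  proof -
    have "LogB m = LogB z + period p + (LogB w + period r) - period k"
      using log_m by (simp add: algebra_simps)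
    then show "five_term_config c = (hatpt z p 0, hatpt m k 0, hatpt w r 0, X, Y)"
      "five_term_config c' = (hatpt z p 1, hatpt m k 1, hatpt w r 1, X, Y)"
      using that by (simp_all add: c'_def c_def five_term_config_def hatpt_def period_vec_def
          algebra_simps)
  qed
  then have "(\<lambda>x. (0 + fiveterm (five_term_config c') x) - fiveterm (five_term_config c) x) =
      (\<lambda>x. padd (curly z p) (curly w r) x - curly m k x)"
    by (auto simp: fiveterm_def padd_def curly_def brk_def)
  moreover have "(\<lambda>x. (0 + fiveterm (five_term_config c') x) - fiveterm (five_term_config c) x)
      \<in> FTrels"
    by (intro FTrels.sub FTrels.add FTrels.zero five_term_config_in_FThat \<open>c \<in> LogConf\<close>
        \<open>c' \<in> LogConf\<close>)
  ultimately show ?thesis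
    by (simp add: Phat_eq_def)
qed

theorem lemma3p1:
  fixes z w :: cpt and p r :: int
  assumes "z \<in> Cbar" and "w \<in> Cbar" and "fst z * fst w \<noteq> 1"
  shows "Phat_eq (padd (curly z p) (curly w r))
           (if ArgB z + ArgB w \<le> - pi then curly (plus0i (fst z * fst w)) (p + r - 1)
            else if ArgB z + ArgB w \<le> pi then curly (plus0i (fst z * fst w)) (p + r)
            else curly (plus0i (fst z * fst w)) (p + r + 1))"
proof -
  let ?m = "plus0i (fst z * fst w)"
  have z: "fst z \<notin> {0, 1}" and w: "fst w \<notin> {0, 1}"
    using Cbar_not_0_1 assms(1,2) by blast+
  have m: "fst ?m \<notin> {0, 1}"
    using z w assms(3) by (simp add: plus0i_def)
  have shifted: "Phat_eq (padd (curly z p) (curly w r)) (curly ?m (p + r - j))"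
    if "-pi < ArgB z + ArgB w + 2 * pi * j" "ArgB z + ArgB w + 2 * pi * j \<le> pi" for j
  proof (rule curly_add_eq[OF z w m])
    have "LogB ?m = Ln (exp (LogB z + LogB w))"
      using z w by (simp add: exp_add exp_LogB) (simp add: plus0i_def LogB_def)
    also have "\<dots> = LogB z + LogB w + period j"
      using that by (intro Ln_exp_eq_add_period) (simp_all add: ArgB_def)
    finally show "LogB ?m + period (p + r - j) = LogB z + period p + (LogB w + period r)"
      by (simp add: algebra_simps)
  qed
  have "-pi \<le> ArgB z" "ArgB z \<le> pi" "-pi \<le> ArgB w" "ArgB w \<le> pi"
    using z w ArgB_bounds by auto
  then show ?thesis
    using shifted[of 1] shifted[of 0] shifted[of "-1"] pi_gt_zero by auto
qed

end
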